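(* Let $G$ be a finite abelian group and $S\subset G$ a partial symmetric Sidon set with center $0$. If $T\subset G$ is a subset with $T\cap(-T)=\emptyset$, then $S\cap T$ is a Sidon set.
   Context: A subset $S\subset G$ is a Sidon set if every solution $(\alpha,\beta,\gamma,\delta)\in S^4$ of $\alpha+\beta=\gamma+\delta$ satisfies $\alpha\in\{\gamma,\delta\}$. $S$ is a partial symmetric Sidon set with center $a_0\in S$ if every solution $(\alpha,\beta,\gamma,\delta)\in S^4$ of $\alpha+\beta=\gamma+\delta$ satisfies either $\alpha\in\{\gamma,\delta\}$ or $\alpha+\beta=\gamma+\delta=a_0$. *)

theory Defs
  imports Main
begin

definition sidon_set :: "'a::ab_group_add set \<Rightarrow> bool" where
  "sidon_set S \<longleftrightarrow>
     (\<forall>\<alpha>\<in>S. \<forall>\<beta>\<in>S. \<forall>\<gamma>\<in>S. \<forall>\<delta>\<in>S.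
        \<alpha> + \<beta> = \<gamma> + \<delta> \<longrightarrow> \<alpha> \<in> {\<gamma>, \<delta>})"

definition partial_symmetric_sidon :: "'a::ab_group_add set \<Rightarrow> 'a \<Rightarrow> bool" where
  "partial_symmetric_sidon S a0 \<longleftrightarrow> a0 \<in> S \<and>
     (\<forall>\<alpha>\<in>S. \<forall>\<beta>\<in>S. \<forall>\<gamma>\<in>S. \<forall>\<delta>\<in>S.
        \<alpha> + \<beta> = \<gamma> + \<delta> \<longrightarrow>
          \<alpha> \<in> {\<gamma>, \<delta>} \<or> (\<alpha> + \<beta> = a0 \<and> \<gamma> + \<delta> = a0))"

end

theory Submission
  imports Defs
begin

lemma sidon_set_if_sums_avoid_center:
  assumes "partial_symmetric_sidon S a0"
    and "A \<subseteq> S"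
    and "\<And>a b. a \<in> A \<Longrightarrow> b \<in> A \<Longrightarrow> a + b \<noteq> a0"
  shows "sidon_set A"
  using assms unfolding partial_symmetric_sidon_def sidon_set_def by blast

lemma add_ne_zero_if_disjoint_uminus_image:
  fixes T :: "'a::ab_group_add set"
  assumes "T \<inter> uminus ` T = {}"
    and "a \<in> T" "b \<in> T"
  shows "a + b \<noteq> 0"
proof
  assume "a + b = 0"
  then have "a = - b" by (simp add: eq_neg_iff_add_eq_0)
  with assms show False by blast
qed

theorem lemma5p1:
  fixes S T :: "'a::{finite, ab_group_add} set"
  assumes "partial_symmetric_sidon S 0"
    and "T \<inter> uminus ` T = {}"
  shows "sidon_set (S \<inter> T)"
proof (rule sidon_set_if_sums_avoid_center[OF assms(1)])
  show "S \<inter> T \<subseteq> S" by blast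
  show "a + b \<noteq> 0" if "a \<in> S \<inter> T" "b \<in> S \<inter> T" for a b
    using add_ne_zero_if_disjoint_uminus_image[OF assms(2)] that by blast
qed

end
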